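(* Fix $I_{ij},I_{jk},I_{ki}\in[0,\infty)$. Let $\mathcal{U}_E^{ijk}$ be the set of $(u_i,u_j,u_k)\in\mathbb{R}^3$ such that $(e^{u_i},e^{u_j},e^{u_k})\in\mathcal{R}_E^{ijk}$. Then $\mathcal{U}_E^{ijk}$ is a connected and simply connected open subset of $\mathbb{R}^3$.
   Context: The set $\mathcal{R}_E^{ijk}$ consists of those $(r_i,r_j,r_k)\in\mathbb{R}^3_{>0}$ for which $$l_{ij}=\sqrt{r_i^2+r_j^2+2I_{ij}r_ir_j},\quad l_{jk}=\sqrt{r_j^2+r_k^2+2I_{jk}r_jr_k},\quad l_{ki}=\sqrt{r_k^2+r_i^2+2I_{ki}r_kr_i}$$ satisfy the strict triangle inequalities. *)

theory Defs
  imports "HOL-Analysis.Analysis"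
begin

definition edge_len :: "real \<Rightarrow> real \<Rightarrow> real \<Rightarrow> real" where
  "edge_len I ra rb = sqrt (ra\<^sup>2 + rb\<^sup>2 + 2 * I * ra * rb)"

definition R_E :: "real \<Rightarrow> real \<Rightarrow> real \<Rightarrow> (real \<times> real \<times> real) set" where
  "R_E Iij Ijk Iki = {(ri, rj, rk). ri > 0 \<and> rj > 0 \<and> rk > 0 \<and>
     (let lij = edge_len Iij ri rj; ljk = edge_len Ijk rj rk; lki = edge_len Iki rk ri
      in lij < ljk + lki \<and> ljk < lki + lij \<and> lki < lij + ljk)}"

definition U_E :: "real \<Rightarrow> real \<Rightarrow> real \<Rightarrow> (real \<times> real \<times> real) set" where
  "U_E Iij Ijk Iki = {(ui, uj, uk). (exp ui, exp uj, exp uk) \<in> R_E Iij Ijk Iki}"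

end

theory Submission
  imports Defs
begin

(* The map (u_i, u_j, u_k) |-> (e^u_i, e^u_j, e^u_k) is a homeomorphism
   from U_E onto R_E, and U_E is open because it is cut out by strict inequalities
   between continuous functions.  So it suffices to show that R_E is contractible.

   Fix the radii r_j, r_k and vary r_i = s.  The triangle inequality
   l_jk < l_ij + l_ki only improves as s grows, while a failure of l_ij < l_jk + l_ki
   (or symmetrically of l_ki < l_ij + l_jk) persists as s grows (a quadratic
   estimate); hence every fibre {s. (s, r_j, r_k) in R_E} is an interval.  When
   I_jk > 0 the fibres are never empty: the radius making the angle at vertex i a
   right angle (l_jk^2 = l_ij^2 + l_ki^2) is an explicit continuous section.  A set
   with convex fibres over a convex base carrying a continuous section is
   contractible (push along the fibres onto the section, then contract the base).
   By cyclic symmetry this covers every case with some I positive; if all I vanish,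
   R_E is the open positive octant.  Contractible sets are connected and simply
   connected. *)

lemma mem_R_E:
  "(ri, rj, rk) \<in> R_E a b c \<longleftrightarrow> ri > 0 \<and> rj > 0 \<and> rk > 0 \<and>
     edge_len a ri rj < edge_len b rj rk + edge_len c rk ri \<and>
     edge_len b rj rk < edge_len c rk ri + edge_len a ri rj \<and>
     edge_len c rk ri < edge_len a ri rj + edge_len b rj rk"
  by (simp add: R_E_def Let_def)

lemma R_E_pos: "(x, y, z) \<in> R_E a b c \<Longrightarrow> x > 0 \<and> y > 0 \<and> z > 0"
  by (simp add: mem_R_E)

lemma edge_len_sym: "edge_len I x y = edge_len I y x"
  unfolding edge_len_def by (simp add: algebra_simps)

lemma edge_len_mono:
  assumes "I \<ge> 0" "y \<ge> 0" "0 \<le> x" "x \<le> x'"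
  shows "edge_len I x y \<le> edge_len I x' y"
  unfolding edge_len_def
proof (rule real_sqrt_le_mono)
  have "x^2 \<le> x'^2" using assms by (intro power_mono) auto
  moreover have "2 * I * x * y \<le> 2 * I * x' * y"
    using assms by (intro mult_right_mono mult_left_mono) auto
  ultimately show "x\<^sup>2 + y\<^sup>2 + 2 * I * x * y \<le> x'\<^sup>2 + y\<^sup>2 + 2 * I * x' * y" by simp
qed

lemma sqrt_sum_le_iff:
  fixes B C X :: real
  assumes "B \<ge> 0" "C \<ge> 0" "X \<ge> 0"
  shows "sqrt B + sqrt C \<le> sqrt X \<longleftrightarrow> B + C \<le> X \<and> 4 * B * C \<le> (X - B - C)^2"
proof -
  have "sqrt B + sqrt C \<le> sqrt X \<longleftrightarrow> (sqrt B + sqrt C)^2 \<le> X"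
    using assms by (metis add_nonneg_nonneg real_le_rsqrt real_sqrt_ge_zero real_sqrt_le_iff
        real_sqrt_unique sqrt_le_D)
  also have "(sqrt B + sqrt C)^2 = B + C + 2 * sqrt (B * C)"
    using assms by (simp add: power2_eq_square algebra_simps real_sqrt_mult)
  also have "B + C + 2 * sqrt (B * C) \<le> X \<longleftrightarrow> 2 * sqrt (B * C) \<le> X - B - C" by linarith
  also have "\<dots> \<longleftrightarrow> B + C \<le> X \<and> 4 * B * C \<le> (X - B - C)^2"
  proof
    assume h: "2 * sqrt (B * C) \<le> X - B - C"
    have "0 \<le> sqrt (B * C)" using assms by simp
    with h have "B + C \<le> X" by linarith
    moreover have "(2 * sqrt (B * C))^2 \<le> (X - B - C)^2"
      using h \<open>0 \<le> sqrt (B * C)\<close> by (intro power_mono) auto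
    ultimately show "B + C \<le> X \<and> 4 * B * C \<le> (X - B - C)^2"
      using assms by (simp add: power_mult_distrib)
  next
    assume h: "B + C \<le> X \<and> 4 * B * C \<le> (X - B - C)^2"
    then have "sqrt (4 * B * C) \<le> sqrt ((X - B - C)^2)" using real_sqrt_le_mono by blast
    moreover have "sqrt (4 * B * C) = 2 * sqrt (B * C)" by (simp add: real_sqrt_mult)
    ultimately show "2 * sqrt (B * C) \<le> X - B - C" using h by simp
  qed
  finally show ?thesis .
qed

text \<open>The polynomial form of a failing triangle inequality is preserved when the
  variable radius s grows: N(s) = (k s - m)^2 - B (s^2 + 2 c q s + q^2) is negative at
  the zero s = m/k of the linear factor, so once N(s) \<ge> 0 to the right of that zero,
  the quadratic N is increasing there.\<close>
lemma quadratic_failure_persists: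
  fixes k m B c q s1 s2 :: real
  assumes m: "m > 0" and q: "q > 0" and c: "c \<ge> 0" and B: "B > 0"
    and s1: "s1 > 0" and s12: "s1 \<le> s2"
    and lin1: "k * s1 - m \<ge> 0"
    and quad1: "(k * s1 - m)^2 \<ge> B * (s1^2 + 2 * c * q * s1 + q^2)"
  shows "k * s2 - m \<ge> 0 \<and> (k * s2 - m)^2 \<ge> B * (s2^2 + 2 * c * q * s2 + q^2)"
proof -
  define N where "N s = (k * s - m)^2 - B * (s^2 + 2 * c * q * s + q^2)" for s
  have k: "k > 0" using lin1 m s1 by (smt (verit) mult_nonpos_nonneg)
  have "2 * c * q * s1 \<ge> 0" using c q s1 by simp
  then have C_gt: "s1^2 + 2 * c * q * s1 + q^2 > s1^2" using q by (smt (verit) zero_less_power)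
  have k2_gt_B: "k^2 > B"
  proof (rule ccontr)
    assume "\<not> k^2 > B"
    have "(k * s1 - m)^2 < (k * s1)^2" using lin1 m by (intro power_strict_mono) auto
    also have "\<dots> \<le> B * s1^2"
      using \<open>\<not> k^2 > B\<close> by (simp add: power_mult_distrib mult_right_mono)
    also have "\<dots> < B * (s1^2 + 2 * c * q * s1 + q^2)" using C_gt B by simp
    finally show False using quad1 by simp
  qed
  define s0 where "s0 = m / k"
  have ks0: "k * s0 = m" using k by (simp add: s0_def)
  have N_s0: "N s0 < 0"
    unfolding N_def using ks0 B m k q c by (simp add: s0_def add_pos_nonneg)
  have N_diff: "N x - N y = (x - y) * ((k^2 - B) * (x + y) - 2 * k * m - 2 * B * c * q)" for x y
    unfolding N_def by (simp add: power2_eq_square algebra_simps)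
  have N_s1: "N s1 \<ge> 0" using quad1 by (simp add: N_def)
  have s0_s1: "s0 \<le> s1" using ks0 lin1 k by (metis diff_ge_0_iff_ge mult_le_cancel_left_pos)
  have "(k^2 - B) * (s1 + s0) - 2 * k * m - 2 * B * c * q > 0"
    using N_diff[of s1 s0] N_s1 N_s0 s0_s1 by (smt (verit) mult_nonneg_nonpos)
  moreover have "(k^2 - B) * (s2 + s1) \<ge> (k^2 - B) * (s1 + s0)"
    using k2_gt_B s12 s0_s1 by (intro mult_left_mono) auto
  ultimately have "0 \<le> (s2 - s1) * ((k^2 - B) * (s2 + s1) - 2 * k * m - 2 * B * c * q)"
    using s12 by (intro mult_nonneg_nonneg) auto
  then have "N s2 \<ge> N s1" using N_diff[of s2 s1] by simp
  moreover have "k * s1 \<le> k * s2" using k s12 by simp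
  ultimately show ?thesis using N_s1 lin1 by (simp add: N_def)
qed

lemma triangle_failure_iff:
  fixes a b c p q s :: real
  assumes abc: "a \<ge> 0" "b \<ge> 0" "c \<ge> 0" and pq: "p > 0" "q > 0" and s: "s \<ge> 0"
  defines "B \<equiv> p^2 + q^2 + 2 * b * p * q"
    and "M \<equiv> (a * p - c * q) * s - (q^2 + b * p * q)"
  shows "edge_len b p q + edge_len c q s \<le> edge_len a s p \<longleftrightarrow>
    M \<ge> 0 \<and> M^2 \<ge> B * (s^2 + 2 * c * q * s + q^2)"
proof -
  define C where "C = q^2 + s^2 + 2 * c * q * s"
  define X where "X = s^2 + p^2 + 2 * a * s * p"
  have lens: "edge_len a s p = sqrt X" "edge_len c q s = sqrt C" "edge_len b p q = sqrt B"
    unfolding edge_len_def X_def C_def B_def by (simp_all add: algebra_simps)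
  have nonneg: "B \<ge> 0" "C \<ge> 0" "X \<ge> 0"
    unfolding B_def C_def X_def using abc pq s by simp_all
  have XBC: "X - B - C = 2 * M"
    unfolding X_def B_def C_def M_def by (simp add: algebra_simps power2_eq_square)
  have "B + C \<le> X \<longleftrightarrow> M \<ge> 0" using XBC by linarith
  moreover have "(X - B - C)^2 = 4 * M^2" using XBC by (simp add: power_mult_distrib)
  moreover have "C = s^2 + 2 * c * q * s + q^2" unfolding C_def by simp
  ultimately show ?thesis
    unfolding lens using sqrt_sum_le_iff[OF nonneg] by (metis mult.assoc mult_le_cancel_left_pos
        zero_less_numeral)
qed

lemma triangle_failure_persists:
  fixes a b c p q s1 s2 :: real
  assumes abc: "a \<ge> 0" "b \<ge> 0" "c \<ge> 0" and pq: "p > 0" "q > 0"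
    and s: "0 < s1" "s1 \<le> s2"
    and fails: "edge_len a s1 p \<ge> edge_len b p q + edge_len c q s1"
  shows "edge_len a s2 p \<ge> edge_len b p q + edge_len c q s2"
proof -
  have "q^2 + b * p * q > 0" "p^2 + q^2 + 2 * b * p * q > 0"
    using abc pq by (simp_all add: add_pos_nonneg add_pos_pos)
  with quadratic_failure_persists[OF _ pq(2) abc(3) _ s, of "q^2 + b * p * q"]
  show ?thesis
    using fails s triangle_failure_iff[OF abc pq, of s1] triangle_failure_iff[OF abc pq, of s2]
    by simp
qed

lemma R_E_fibre_convex:
  assumes abc: "a \<ge> 0" "b \<ge> 0" "c \<ge> 0"
  shows "convex {s. (s, rj, rk) \<in> R_E a b c}"
  unfolding is_interval_convex_1[symmetric] is_interval_1
proof (intro ballI allI impI, elim conjE, simp only: mem_Collect_eq)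
  fix s1 s2 s
  assume m1: "(s1, rj, rk) \<in> R_E a b c" and m2: "(s2, rj, rk) \<in> R_E a b c"
    and s: "s1 \<le> s" "s \<le> s2"
  have pos: "s1 > 0" "rj > 0" "rk > 0" and spos: "s > 0" using m1 s by (auto simp: mem_R_E)
  have "edge_len c rk s1 \<le> edge_len c rk s" "edge_len a s1 rj \<le> edge_len a s rj"
    using edge_len_mono[of c rk s1 s] edge_len_mono[of a rj s1 s] abc pos s
    by (simp_all add: edge_len_sym)
  then have jk: "edge_len b rj rk < edge_len c rk s + edge_len a s rj"
    using m1 by (simp add: mem_R_E)
  have ij: "edge_len a s rj < edge_len b rj rk + edge_len c rk s"
    using triangle_failure_persists[of a b c rj rk s s2] m2 abc pos spos s
    by (force simp: mem_R_E)
  have ki: "edge_len c rk s < edge_len a s rj + edge_len b rj rk"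
    using triangle_failure_persists[of c b a rk rj s s2] m2 abc pos spos s
    by (force simp: mem_R_E edge_len_sym add.commute)
  show "(s, rj, rk) \<in> R_E a b c" using ij jk ki spos pos by (simp add: mem_R_E)
qed

text \<open>The radius r_i for which the angle at vertex i is right, i.e.
  l_jk^2 = l_ij^2 + l_ki^2: the positive root of h^2 + (a r_j + c r_k) h = b r_j r_k.\<close>
definition right_radius :: "real \<Rightarrow> real \<Rightarrow> real \<Rightarrow> real \<Rightarrow> real \<Rightarrow> real" where
  "right_radius a b c rj rk = (sqrt ((a * rj + c * rk)^2 + 4 * b * rj * rk) - (a * rj + c * rk)) / 2"

lemma right_radius_pos:
  assumes "a \<ge> 0" "b > 0" "c \<ge> 0" "rj > 0" "rk > 0"
  shows "right_radius a b c rj rk > 0"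
proof -
  have "sqrt ((a * rj + c * rk)^2) < sqrt ((a * rj + c * rk)^2 + 4 * b * rj * rk)"
    using assms by (intro real_sqrt_less_mono) simp
  moreover have "sqrt ((a * rj + c * rk)^2) = a * rj + c * rk" using assms by simp
  ultimately show ?thesis unfolding right_radius_def by simp
qed

lemma right_radius_root:
  fixes a b c rj rk :: real
  assumes "b \<ge> 0" "rj \<ge> 0" "rk \<ge> 0"
  defines "h \<equiv> right_radius a b c rj rk"
  shows "h^2 + h * (a * rj + c * rk) = b * rj * rk"
proof -
  define X where "X = a * rj + c * rk"
  define S where "S = sqrt (X^2 + 4 * b * rj * rk)"
  have S2: "S^2 = X^2 + 4 * b * rj * rk" unfolding S_def using assms by simp
  have "h = (S - X) / 2" unfolding h_def right_radius_def S_def X_def by simp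
  then have "S = X + 2 * h" by simp
  then have "S^2 - X^2 = 4 * (h^2 + h * X)" by (simp add: power2_eq_square algebra_simps)
  then show ?thesis unfolding S2 X_def by simp
qed

lemma sqrt_pythagorean_triangle:
  fixes X Y Z :: real
  assumes "X > 0" "Y > 0" "Z = X + Y"
  shows "sqrt X < sqrt Z + sqrt Y \<and> sqrt Z < sqrt X + sqrt Y \<and> sqrt Y < sqrt X + sqrt Z"
proof -
  have "Z < (sqrt X + sqrt Y)^2"
    using assms by (simp add: power2_eq_square algebra_simps)
  then have "sqrt Z < sqrt X + sqrt Y"
    using assms by (metis real_less_rsqrt add_nonneg_nonneg real_sqrt_ge_zero less_imp_le
        real_sqrt_less_mono real_sqrt_unique)
  moreover have "sqrt X < sqrt Z" "sqrt Y < sqrt Z" using assms by simp_all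
  ultimately show ?thesis using real_sqrt_ge_zero[of X] real_sqrt_ge_zero[of Y] by linarith
qed

lemma right_radius_in_R_E:
  assumes abc: "a \<ge> 0" "b > 0" "c \<ge> 0" and r: "rj > 0" "rk > 0"
  shows "(right_radius a b c rj rk, rj, rk) \<in> R_E a b c"
proof -
  define h where "h = right_radius a b c rj rk"
  have h: "h > 0" using right_radius_pos[OF assms] by (simp add: h_def)
  define X where "X = h^2 + rj^2 + 2 * a * h * rj"
  define Y where "Y = rk^2 + h^2 + 2 * c * rk * h"
  define Z where "Z = rj^2 + rk^2 + 2 * b * rj * rk"
  have "X > 0" "Y > 0" unfolding X_def Y_def using h abc r by (simp_all add: add_pos_nonneg)
  moreover have "Z = X + Y"
  proof -
    have "h^2 + h * (a * rj + c * rk) = b * rj * rk"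
      using right_radius_root[of b rj rk] abc r unfolding h_def by simp
    then show ?thesis unfolding X_def Y_def Z_def by (simp add: algebra_simps power2_eq_square)
  qed
  moreover have "edge_len a h rj = sqrt X" "edge_len b rj rk = sqrt Z" "edge_len c rk h = sqrt Y"
    unfolding edge_len_def X_def Y_def Z_def by simp_all
  ultimately show ?thesis
    using sqrt_pythagorean_triangle[of X Y Z] h r unfolding h_def[symmetric] by (simp add: mem_R_E)
qed

text \<open>A set S of pairs (x, y) whose fibres {x. (x, y) \<in> S} are convex, lying over a
  convex base T that carries a continuous section \<sigma>, is contractible: the straight-line
  homotopy in each fibre retracts S onto the graph of \<sigma>, which is contracted by
  contracting T.\<close>
lemma contractible_convex_fibres_with_section:
  fixes S :: "('a::real_normed_vector \<times> 'b::real_normed_vector) set"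
  assumes base: "convex T" "snd ` S \<subseteq> T"
    and fibres: "\<And>y. convex {x. (x, y) \<in> S}"
    and section_cont: "continuous_on T \<sigma>"
    and section_in: "\<And>y. y \<in> T \<Longrightarrow> (\<sigma> y, y) \<in> S"
  shows "contractible S"
proof (cases "S = {}")
  case False
  then obtain t0 where t0: "t0 \<in> T" using base(2) by blast
  define \<psi> where "\<psi> y = (\<sigma> y, y)" for y
  have cont_\<psi>: "continuous_on T \<psi>"
    unfolding \<psi>_def by (intro continuous_intros section_cont)
  have snd_cont: "continuous_on S snd" by (intro continuous_intros)
  have retract: "homotopic_with_canon (\<lambda>f. True) S S id (\<psi> \<circ> snd)"
  proof (rule homotopic_with_linear)
    show "continuous_on S (\<psi> \<circ> snd)"
      using continuous_on_compose[OF snd_cont continuous_on_subset[OF cont_\<psi> base(2)]] .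
    show "closed_segment (id p) ((\<psi> \<circ> snd) p) \<subseteq> S" if "p \<in> S" for p
    proof
      fix q assume q: "q \<in> closed_segment (id p) ((\<psi> \<circ> snd) p)"
      obtain x y where p: "p = (x, y)" by fastforce
      have "(\<sigma> y, y) \<in> S" using section_in base(2) that p by force
      then have "closed_segment x (\<sigma> y) \<subseteq> {x. (x, y) \<in> S}"
        using that p by (intro closed_segment_subset fibres) auto
      moreover obtain q1 q2 where "q = (q1, q2)" by fastforce
      ultimately show "q \<in> S"
        using q closed_segment_PairD[of q1 q2 x y "\<sigma> y" y] by (auto simp: p \<psi>_def)
    qed
  qed (simp add: continuous_on_id)
  have contract: "homotopic_with_canon (\<lambda>f. True) S S (\<psi> \<circ> snd) (\<psi> \<circ> (\<lambda>p. t0))"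
  proof (rule homotopic_with_compose_continuous_left[OF _ cont_\<psi>])
    show "homotopic_with_canon (\<lambda>f. True) S T snd (\<lambda>p. t0)"
      using base t0 by (intro homotopic_with_linear snd_cont continuous_on_const)
        (force intro: closed_segment_subset[THEN subsetD])
  qed (use section_in \<psi>_def in auto)
  have "homotopic_with_canon (\<lambda>f. True) S S id (\<lambda>p. \<psi> t0)"
    using homotopic_with_trans[OF retract contract] by (simp add: comp_def)
  then show ?thesis unfolding contractible_def by blast
qed simp

lemma contractible_R_E_pos_middle:
  assumes "a \<ge> 0" "b > 0" "c \<ge> 0"
  shows "contractible (R_E a b c)"
proof (rule contractible_convex_fibres_with_section)
  show "convex ({0<..} \<times> {0<..} :: (real \<times> real) set)"
    by (intro convex_Times convex_real_interval)
  show "snd ` R_E a b c \<subseteq> {0<..} \<times> {0<..}" by (force simp: mem_R_E)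
  show "convex {x. (x, y) \<in> R_E a b c}" for y
    using R_E_fibre_convex assms by (cases y) simp
  show "continuous_on ({0<..} \<times> {0<..}) (\<lambda>(rj, rk). right_radius a b c rj rk)"
    unfolding right_radius_def case_prod_beta by (intro continuous_intros) auto
  show "((\<lambda>(rj, rk). right_radius a b c rj rk) y, y) \<in> R_E a b c"
    if "y \<in> {0<..} \<times> {0<..}" for y
    using that right_radius_in_R_E assms by (cases y) auto
qed

lemma R_E_rot: "R_E b c a homeomorphic R_E a b c"
proof (rule homeomorphicI[where f = "\<lambda>(x, y, z). (z, x, y)" and g = "\<lambda>(x, y, z). (y, z, x)"])
  show "(\<lambda>(x, y, z). (z, x, y)) ` R_E b c a = R_E a b c"
    by (auto simp: image_iff R_E_def Let_def)
  show "(\<lambda>(x, y, z). (y, z, x)) ` R_E a b c = R_E b c a"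
    by (auto simp: image_iff R_E_def Let_def)
qed (auto simp: case_prod_beta intro!: continuous_intros)

lemma sqrt_sum_squares_triangle:
  fixes x y z :: real
  assumes "x > 0" "y > 0" "z > 0"
  shows "sqrt (x^2 + y^2) < sqrt (y^2 + z^2) + sqrt (z^2 + x^2)"
proof -
  have "sqrt (x^2 + y^2) \<le> x + y"
    using assms by (intro real_le_lsqrt) (simp_all add: power2_eq_square algebra_simps)
  also have "\<dots> < sqrt (y^2 + z^2) + sqrt (z^2 + x^2)"
    using assms real_sqrt_less_mono[of "y^2" "y^2 + z^2"] real_sqrt_less_mono[of "x^2" "z^2 + x^2"]
    by simp
  finally show ?thesis .
qed

lemma R_E_zero: "R_E 0 0 0 = {0<..} \<times> {0<..} \<times> {0<..}"
  by (force simp: mem_R_E edge_len_def sqrt_sum_squares_triangle)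

lemma contractible_R_E:
  assumes "a \<ge> 0" "b \<ge> 0" "c \<ge> 0"
  shows "contractible (R_E a b c)"
proof -
  consider "b > 0" | "c > 0" | "a > 0" | "a = 0" "b = 0" "c = 0" using assms by linarith
  then show ?thesis
  proof cases
    case 1
    then show ?thesis using contractible_R_E_pos_middle assms by simp
  next
    case 2
    then have "contractible (R_E b c a)" using contractible_R_E_pos_middle assms by simp
    then show ?thesis using homeomorphic_contractible_eq[OF R_E_rot] by blast
  next
    case 3
    then have "contractible (R_E c a b)" using contractible_R_E_pos_middle assms by simp
    then show ?thesis
      using homeomorphic_contractible_eq[OF homeomorphic_trans[OF R_E_rot R_E_rot]] by blast
  next
    case 4
    then have "R_E a b c = {0<..} \<times> {0<..} \<times> {0<..}" using R_E_zero by simp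
    then have "convex (R_E a b c)" by (simp add: convex_Times convex_real_interval)
    then show ?thesis by (rule convex_imp_contractible)
  qed
qed

lemma U_E_homeo: "U_E a b c homeomorphic R_E a b c"
proof (rule homeomorphicI[where f = "\<lambda>(x, y, z). (exp x, exp y, exp z)"
                              and g = "\<lambda>(x, y, z). (ln x, ln y, ln z)"])
  show "(\<lambda>(x, y, z). (exp x, exp y, exp z)) ` U_E a b c = R_E a b c"
  proof
    show "R_E a b c \<subseteq> (\<lambda>(x, y, z). (exp x, exp y, exp z)) ` U_E a b c"
    proof clarify
      fix x y z assume r: "(x, y, z) \<in> R_E a b c"
      then have "(ln x, ln y, ln z) \<in> U_E a b c" using R_E_pos by (simp add: U_E_def)
      then show "(x, y, z) \<in> (\<lambda>(x, y, z). (exp x, exp y, exp z)) ` U_E a b c"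
        by (rule rev_image_eqI) (use R_E_pos r in simp)
    qed
  qed (auto simp: U_E_def)
  show "(\<lambda>(x, y, z). (ln x, ln y, ln z)) ` R_E a b c = U_E a b c"
  proof
    show "U_E a b c \<subseteq> (\<lambda>(x, y, z). (ln x, ln y, ln z)) ` R_E a b c"
    proof clarify
      fix x y z assume "(x, y, z) \<in> U_E a b c"
      then have "(exp x, exp y, exp z) \<in> R_E a b c" by (simp add: U_E_def)
      then show "(x, y, z) \<in> (\<lambda>(x, y, z). (ln x, ln y, ln z)) ` R_E a b c"
        by (rule rev_image_eqI) simp
    qed
  qed (use R_E_pos in \<open>auto simp: U_E_def\<close>)
qed (auto simp: case_prod_beta U_E_def mem_R_E intro!: continuous_intros)

lemma open_U_E: "open (U_E a b c)"
proof -
  define lij :: "real \<times> real \<times> real \<Rightarrow> real"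
    where "lij = (\<lambda>(ui, uj, uk). edge_len a (exp ui) (exp uj))"
  define ljk :: "real \<times> real \<times> real \<Rightarrow> real"
    where "ljk = (\<lambda>(ui, uj, uk). edge_len b (exp uj) (exp uk))"
  define lki :: "real \<times> real \<times> real \<Rightarrow> real"
    where "lki = (\<lambda>(ui, uj, uk). edge_len c (exp uk) (exp ui))"
  have U_E_eq: "U_E a b c = {u. lij u < ljk u + lki u} \<inter> {u. ljk u < lki u + lij u} \<inter>
      {u. lki u < lij u + ljk u}"
    by (auto simp: U_E_def mem_R_E lij_def ljk_def lki_def)
  have "continuous_on UNIV lij" "continuous_on UNIV ljk" "continuous_on UNIV lki"
    unfolding lij_def ljk_def lki_def edge_len_def case_prod_beta by (intro continuous_intros)+
  then show ?thesis
    unfolding U_E_eq by (intro open_Int open_Collect_less continuous_on_add)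
qed

theorem corollary2p2:
  fixes Iij Ijk Iki :: real
  assumes "Iij \<ge> 0" and "Ijk \<ge> 0" and "Iki \<ge> 0"
  shows "open (U_E Iij Ijk Iki) \<and> connected (U_E Iij Ijk Iki) \<and> simply_connected (U_E Iij Ijk Iki)"
proof -
  have "contractible (U_E Iij Ijk Iki)"
    using homeomorphic_contractible_eq[OF U_E_homeo] contractible_R_E[OF assms] by blast
  then show ?thesis
    using open_U_E contractible_imp_connected contractible_imp_simply_connected by blast
qed

end
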